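(* A function $f : X \to \mathbb{R}$ is of Baire class 1 if and only if both $f$ and $-f$ are limsup functions.
   Context: Let $A$ be a non-empty countable set and $T$ a pruned tree on $A$ (a set of finite sequences of elements of $A$, closed under initial segments, in which every sequence has a proper extension in $T$). Let $X$ be the set of infinite branches of $T$, with the topology generated by the cylinder sets $O(s) = \{x \in X : s \text{ is an initial segment of } x\}$, $s \in T$. A function $f : X \to \mathbb{R}$ is a limsup function if there exists $u : T \to \mathbb{R}$ with $f(x) = \limsup_{t\to\infty} u(x_0,\dots,x_t)$ for every $x \in X$. Baire class 1 means a pointwise limit of a sequence of continuous functions $X \to \mathbb{R}$. *)

theory Defs
  imports "HOL-Analysis.Analysis" "HOL-Library.Countable_Set" "HOL-Library.Sublist"
begin

definition pruned_tree :: "'a set \<Rightarrow> 'a list set \<Rightarrow> bool" where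
  "pruned_tree A T \<longleftrightarrow>
     T \<subseteq> lists A \<and>
     (\<forall>s\<in>T. \<forall>r. prefix r s \<longrightarrow> r \<in> T) \<and>
     (\<forall>s\<in>T. \<exists>t\<in>T. strict_prefix s t)"

definition branches :: "'a list set \<Rightarrow> (nat \<Rightarrow> 'a) set" where
  "branches T = {x. \<forall>n. map x [0..<n] \<in> T}"

definition cyl :: "'a list set \<Rightarrow> 'a list \<Rightarrow> (nat \<Rightarrow> 'a) set" where
  "cyl T s = {x \<in> branches T. map x [0..<length s] = s}"

definition branch_topology :: "'a list set \<Rightarrow> (nat \<Rightarrow> 'a) topology" where
  "branch_topology T = topology_generated_by (cyl T ` T)"

definition limsup_function :: "'a list set \<Rightarrow> ((nat \<Rightarrow> 'a) \<Rightarrow> real) \<Rightarrow> bool" where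
  "limsup_function T f \<longleftrightarrow>
     (\<exists>u :: 'a list \<Rightarrow> real. \<forall>x \<in> branches T.
        ereal (f x) = limsup (\<lambda>t. ereal (u (map x [0..<Suc t]))))"

definition baire_class_1 :: "'a list set \<Rightarrow> ((nat \<Rightarrow> 'a) \<Rightarrow> real) \<Rightarrow> bool" where
  "baire_class_1 T f \<longleftrightarrow>
     (\<exists>g :: nat \<Rightarrow> (nat \<Rightarrow> 'a) \<Rightarrow> real.
        (\<forall>n. continuous_map (branch_topology T) euclideanreal (g n)) \<and>
        (\<forall>x \<in> branches T. (\<lambda>n. g n x) \<longlonglongrightarrow> f x))"

end

theory Submission
  imports Defs
begin

text \<open>
  If continuous \<open>g\<^sub>n\<close> converge pointwise to \<open>f\<close>, put \<open>u(s) = g\<^sub>n(y)\<close> for a branch \<open>y\<close> through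
  \<open>s\<close>, with \<open>n \<le> |s|\<close> the largest index for which \<open>g\<^sub>n\<close> oscillates by less than \<open>1/(n+1)\<close> on
  the cylinder of \<open>s\<close>. By continuity this index tends to infinity along every branch, so
  \<open>u\<close> even converges to \<open>f\<close> along branches; applying this to \<open>-g\<^sub>n\<close> handles \<open>-f\<close>.

  Conversely, if \<open>f = lim sup u\<close> and \<open>-f = lim sup v\<close> along branches, let \<open>g\<^sub>n(x)\<close> be the value of
  \<open>u\<close> at the first time \<open>t\<close> such that \<open>u(x|t) \<ge> -v(x|j) - 1/(n+1)\<close> for some \<open>j \<in> [n, t]\<close>. This
  is a stopping time, so \<open>g\<^sub>n\<close> is locally constant, and the lim sup of \<open>u\<close> and the lim inf
  of \<open>-v\<close> squeeze \<open>g\<^sub>n(x)\<close> to \<open>f(x)\<close>.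
\<close>

section \<open>Cylinders and the topology of branches\<close>

lemma mem_cyl_map_upt:
  "y \<in> cyl T (map x [0..<k]) \<longleftrightarrow> y \<in> branches T \<and> (\<forall>i<k. y i = x i)"
  by (auto simp: cyl_def map_eq_conv)

lemma cyl_map_upt_antimono:
  "k \<le> k' \<Longrightarrow> cyl T (map x [0..<k']) \<subseteq> cyl T (map x [0..<k])"
  by (auto simp: mem_cyl_map_upt)

lemma self_mem_cyl_map_upt: "x \<in> branches T \<Longrightarrow> x \<in> cyl T (map x [0..<k])"
  by (simp add: mem_cyl_map_upt)

lemma topspace_branch_topology: "topspace (branch_topology T) = branches T"
proof -
  have "\<Union> (cyl T ` T) = branches T"
  proof
    show "branches T \<subseteq> \<Union> (cyl T ` T)"
    proof
      fix x assume x: "x \<in> branches T"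
      then have "map x [0..<0] \<in> T" by (simp only: branches_def mem_Collect_eq)
      with x show "x \<in> \<Union> (cyl T ` T)" by (intro UN_I[of "[]"]) (auto simp: cyl_def)
    qed
  qed (auto simp: cyl_def)
  then show ?thesis by (simp add: branch_topology_def)
qed

lemma openin_branch_topology:
  "openin (branch_topology T) U \<longleftrightarrow>
     U \<subseteq> branches T \<and> (\<forall>x\<in>U. \<exists>k. cyl T (map x [0..<k]) \<subseteq> U)"
proof
  assume U: "openin (branch_topology T) U"
  have "\<exists>k. cyl T (map x [0..<k]) \<subseteq> V" if "generate_topology_on (cyl T ` T) V" "x \<in> V" for V x
    using that
  proof (induction arbitrary: x)
    case Empty
    then show ?case by simp
  next
    case (Int U V)
    then obtain k k' where "cyl T (map x [0..<k]) \<subseteq> U" "cyl T (map x [0..<k']) \<subseteq> V"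
      by blast
    then show ?case
      using cyl_map_upt_antimono[OF max.cobounded1[of k k']]
        cyl_map_upt_antimono[OF max.cobounded2[of k' k]] by blast
  next
    case (UN K)
    then show ?case by blast
  next
    case (Basis S)
    then obtain s where s: "S = cyl T s" by blast
    with Basis have "map x [0..<length s] = s" by (simp add: cyl_def)
    with s show ?case by (intro exI[of _ "length s"]) simp
  qed
  moreover have "generate_topology_on (cyl T ` T) U"
    using U unfolding branch_topology_def by (rule openin_topology_generated_by)
  moreover have "U \<subseteq> branches T"
    using openin_subset[OF U] by (simp add: topspace_branch_topology)
  ultimately show "U \<subseteq> branches T \<and> (\<forall>x\<in>U. \<exists>k. cyl T (map x [0..<k]) \<subseteq> U)"
    by blast
next
  assume U: "U \<subseteq> branches T \<and> (\<forall>x\<in>U. \<exists>k. cyl T (map x [0..<k]) \<subseteq> U)"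
  show "openin (branch_topology T) U"
  proof (subst openin_subopen, intro ballI)
    fix x assume "x \<in> U"
    with U obtain k where k: "cyl T (map x [0..<k]) \<subseteq> U" and x: "x \<in> branches T" by blast
    have "map x [0..<k] \<in> T" using x by (simp add: branches_def)
    then have "openin (branch_topology T) (cyl T (map x [0..<k]))"
      unfolding branch_topology_def openin_topology_generated_by_iff
      by (intro generate_topology_on.Basis) blast
    with k x show "\<exists>S. openin (branch_topology T) S \<and> x \<in> S \<and> S \<subseteq> U"
      using self_mem_cyl_map_upt by blast
  qed
qed

lemma continuous_map_branch_topology_iff:
  "continuous_map (branch_topology T) euclideanreal g \<longleftrightarrow>
     (\<forall>x\<in>branches T. \<forall>e>0. \<exists>k. \<forall>y\<in>cyl T (map x [0..<k]). \<bar>g y - g x\<bar> < e)"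
    (is "_ \<longleftrightarrow> ?local")
proof
  assume g: "continuous_map (branch_topology T) euclideanreal g"
  show ?local
  proof (intro ballI allI impI)
    fix x e assume x: "x \<in> branches T" and "(e::real) > 0"
    have "openin (branch_topology T) {y \<in> branches T. g y \<in> ball (g x) e}"
      using openin_continuous_map_preimage[OF g, of "ball (g x) e"]
      by (simp add: topspace_branch_topology)
    with x \<open>e > 0\<close> obtain k where "cyl T (map x [0..<k]) \<subseteq> {y \<in> branches T. g y \<in> ball (g x) e}"
      unfolding openin_branch_topology by fastforce
    then show "\<exists>k. \<forall>y\<in>cyl T (map x [0..<k]). \<bar>g y - g x\<bar> < e"
      by (auto simp: dist_real_def abs_minus_commute)
  qed
next
  assume local: ?local
  show "continuous_map (branch_topology T) euclideanreal g"
    unfolding continuous_map_def topspace_branch_topology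
  proof (intro conjI allI impI)
    fix U :: "real set" assume "openin euclideanreal U"
    show "openin (branch_topology T) {x \<in> branches T. g x \<in> U}"
      unfolding openin_branch_topology
    proof (intro conjI ballI)
      fix x assume x: "x \<in> {x \<in> branches T. g x \<in> U}"
      with \<open>openin euclideanreal U\<close> obtain e where "e > 0" "ball (g x) e \<subseteq> U"
        by (auto simp: open_contains_ball)
      moreover obtain k where "\<forall>y\<in>cyl T (map x [0..<k]). \<bar>g y - g x\<bar> < e"
        using local x \<open>e > 0\<close> by blast
      ultimately show "\<exists>k. cyl T (map x [0..<k]) \<subseteq> {x \<in> branches T. g x \<in> U}"
        by (intro exI[of _ k]) (auto simp: mem_cyl_map_upt dist_real_def abs_minus_commute)
    qed auto
  qed simp
qed

lemma continuous_map_branch_topologyI_locally_constant: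
  assumes "\<And>x. x \<in> branches T \<Longrightarrow> \<exists>k. \<forall>y\<in>cyl T (map x [0..<k]). g y = g x"
  shows "continuous_map (branch_topology T) euclideanreal g"
  using assms by (fastforce simp: continuous_map_branch_topology_iff)

lemma continuous_map_imp_eventually_small_oscillation:
  assumes "continuous_map (branch_topology T) euclideanreal g" "x \<in> branches T" "e > 0"
  shows "\<forall>\<^sub>F k in sequentially. \<forall>y\<in>cyl T (map x [0..<k]). \<forall>z\<in>cyl T (map x [0..<k]).
           \<bar>g y - g z\<bar> < e"
proof -
  have "e / 2 > 0" using assms(3) by simp
  then obtain k where k: "\<forall>y\<in>cyl T (map x [0..<k]). \<bar>g y - g x\<bar> < e / 2"
    using assms(1,2) unfolding continuous_map_branch_topology_iff by blast
  show ?thesis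
    unfolding eventually_sequentially
  proof (intro exI[of _ k] allI impI ballI)
    fix k' y z assume "k \<le> k'" "y \<in> cyl T (map x [0..<k'])" "z \<in> cyl T (map x [0..<k'])"
    then have "\<bar>g y - g x\<bar> < e / 2" "\<bar>g z - g x\<bar> < e / 2"
      using k cyl_map_upt_antimono by blast+
    then show "\<bar>g y - g z\<bar> < e" by linarith
  qed
qed

lemma Least_cong_below:
  assumes "\<exists>t. P t" and "\<And>t. t \<le> (LEAST t. P t) \<Longrightarrow> Q t \<longleftrightarrow> P t"
  shows "(LEAST t::nat. Q t) = (LEAST t. P t)"
proof (rule Least_equality)
  show "Q (LEAST t. P t)" using assms LeastI_ex by blast
  show "(LEAST t. P t) \<le> t" if "Q t" for t
    using that assms(2)[of t] not_less_Least[of t P] by fastforce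
qed

lemma continuous_map_stopped_prefix_function:
  fixes Q :: "'a list \<Rightarrow> bool" and h :: "'a list \<Rightarrow> real"
  assumes "\<And>x. x \<in> branches T \<Longrightarrow> \<exists>t. Q (map x [0..<Suc t])"
  shows "continuous_map (branch_topology T) euclideanreal
           (\<lambda>x. h (map x [0..<Suc (LEAST t. Q (map x [0..<Suc t]))]))"
proof (rule continuous_map_branch_topologyI_locally_constant)
  fix x assume x: "x \<in> branches T"
  let ?\<tau> = "\<lambda>x. LEAST t. Q (map x [0..<Suc t])"
  have "?\<tau> y = ?\<tau> x \<and> map y [0..<Suc (?\<tau> x)] = map x [0..<Suc (?\<tau> x)]"
    if "y \<in> cyl T (map x [0..<Suc (?\<tau> x)])" for y
  proof -
    have agree: "map y [0..<Suc t] = map x [0..<Suc t]" if "t \<le> ?\<tau> x" for t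
      using \<open>y \<in> _\<close> that by (auto simp: mem_cyl_map_upt map_eq_conv simp del: upt_Suc)
    have "?\<tau> y = ?\<tau> x"
    proof (rule Least_cong_below)
      show "\<exists>t. Q (map x [0..<Suc t])" using assms[OF x] .
      show "Q (map y [0..<Suc t]) \<longleftrightarrow> Q (map x [0..<Suc t])" if "t \<le> ?\<tau> x" for t
        using agree[OF that] by (simp only:)
    qed
    with agree show ?thesis by simp
  qed
  then show "\<exists>k. \<forall>y\<in>cyl T (map x [0..<k]).
               h (map y [0..<Suc (?\<tau> y)]) = h (map x [0..<Suc (?\<tau> x)])"
    by (intro exI[of _ "Suc (?\<tau> x)"]) (metis (no_types, lifting))
qed

lemma limsup_ereal_lessD:
  assumes "limsup (\<lambda>t. ereal (a t)) = ereal c" "c < b"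
  shows "\<forall>\<^sub>F t in sequentially. a t < b"
proof -
  have "limsup (\<lambda>t. ereal (a t)) < ereal b" using assms by simp
  then have "\<forall>\<^sub>F t in sequentially. ereal (a t) < ereal b" by (rule Limsup_lessD)
  then show ?thesis by simp
qed

lemma less_limsup_erealD:
  assumes "limsup (\<lambda>t. ereal (a t)) = ereal c" "b < c"
  shows "\<exists>\<^sub>F t in sequentially. b < a t"
proof (rule ccontr)
  assume "\<not> (\<exists>\<^sub>F t in sequentially. b < a t)"
  then have "\<forall>\<^sub>F t in sequentially. ereal (a t) \<le> ereal b"
    by (simp add: not_frequently not_less)
  then have "limsup (\<lambda>t. ereal (a t)) \<le> ereal b" by (rule Limsup_bounded)
  with assms show False by simp
qed

section \<open>Baire class 1 functions are limsup functions\<close>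

lemma tendsto_if_close_to_reindexed:
  fixes a h :: "nat \<Rightarrow> real"
  assumes \<mu>: "filterlim \<mu> at_top sequentially" and h: "h \<longlonglongrightarrow> l"
    and close: "\<forall>\<^sub>F t in sequentially. \<bar>a t - h (\<mu> t)\<bar> \<le> inverse (real (Suc (\<mu> t)))"
  shows "a \<longlonglongrightarrow> l"
proof (rule Lim_transform)
  show "(\<lambda>t. h (\<mu> t)) \<longlonglongrightarrow> l"
    using filterlim_compose[OF h \<mu>] .
  have "\<forall>\<^sub>F t in sequentially. norm (a t - h (\<mu> t)) \<le> inverse (real (Suc (\<mu> t)))"
    using close by simp
  moreover have "(\<lambda>t. inverse (real (Suc (\<mu> t)))) \<longlonglongrightarrow> 0"
    using filterlim_compose[OF LIMSEQ_inverse_real_of_nat \<mu>] .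
  ultimately show "(\<lambda>t. a t - h (\<mu> t)) \<longlonglongrightarrow> 0"
    by (rule Lim_null_comparison)
qed

lemma pointwise_limit_of_continuous_imp_limit_along_branches:
  assumes cont: "\<And>n. continuous_map (branch_topology T) euclideanreal (g n)"
    and lim: "\<And>x. x \<in> branches T \<Longrightarrow> (\<lambda>n. g n x) \<longlonglongrightarrow> f x"
  shows "\<exists>u. \<forall>x\<in>branches T. (\<lambda>t. u (map x [0..<t])) \<longlonglongrightarrow> f x"
proof -
  define small_osc where "small_osc n s \<longleftrightarrow>
    (\<forall>y\<in>cyl T s. \<forall>z\<in>cyl T s. \<bar>g n y - g n z\<bar> < inverse (real (Suc n)))" for n s
  define m where "m s = Max {n. n \<le> length s \<and> (n = 0 \<or> small_osc n s)}" for s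
  define u where "u s = g (m s) (SOME y. y \<in> cyl T s)" for s
  have finite: "finite {n. n \<le> length s \<and> (n = 0 \<or> small_osc n s)}" for s
    by (rule finite_subset[of _ "{..length s}"]) auto
  have m_small_osc: "m s = 0 \<or> small_osc (m s) s" for s
  proof -
    have "m s \<in> {n. n \<le> length s \<and> (n = 0 \<or> small_osc n s)}"
      unfolding m_def by (rule Max_in[OF finite]) auto
    then show ?thesis by simp
  qed
  have m_ge: "n \<le> m s" if "n \<le> length s" "small_osc n s" for n s
    unfolding m_def using that by (intro Max_ge[OF finite]) simp
  have "(\<lambda>t. u (map x [0..<t])) \<longlonglongrightarrow> f x" if x: "x \<in> branches T" for x
  proof -
    let ?s = "\<lambda>t. map x [0..<t]"
    have m_to_top: "filterlim (\<lambda>t. m (?s t)) at_top sequentially"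
      unfolding filterlim_at_top
    proof
      fix N
      have "\<forall>\<^sub>F t in sequentially. small_osc N (?s t)"
        using continuous_map_imp_eventually_small_oscillation[OF cont x, of "inverse (real (Suc N))"]
        by (simp add: small_osc_def)
      moreover have "\<forall>\<^sub>F t in sequentially. N \<le> length (?s t)" by simp
      ultimately show "\<forall>\<^sub>F t in sequentially. N \<le> m (?s t)"
        by eventually_elim (rule m_ge)
    qed
    have "\<forall>\<^sub>F t in sequentially. 1 \<le> m (?s t)"
      using m_to_top by (simp add: filterlim_at_top)
    then have "\<forall>\<^sub>F t in sequentially.
                 \<bar>u (?s t) - g (m (?s t)) x\<bar> \<le> inverse (real (Suc (m (?s t))))"
    proof eventually_elim
      case (elim t)
      have x_mem: "x \<in> cyl T (?s t)" using x by (rule self_mem_cyl_map_upt)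
      then have "(SOME y. y \<in> cyl T (?s t)) \<in> cyl T (?s t)"
        by (rule someI[where P = "\<lambda>y. y \<in> cyl T (?s t)"])
      moreover have "small_osc (m (?s t)) (?s t)"
        using elim m_small_osc by (metis not_one_le_zero)
      ultimately have "\<bar>g (m (?s t)) (SOME y. y \<in> cyl T (?s t)) - g (m (?s t)) x\<bar>
                        < inverse (real (Suc (m (?s t))))"
        using x_mem unfolding small_osc_def by blast
      then show ?case by (simp add: u_def)
    qed
    with m_to_top lim[OF x] show ?thesis by (rule tendsto_if_close_to_reindexed)
  qed
  then show ?thesis by blast
qed

lemma baire_class_1_imp_limsup_function:
  assumes "baire_class_1 T f"
  shows "limsup_function T f"
proof -
  obtain g where "\<And>n. continuous_map (branch_topology T) euclideanreal (g n)"
    and "\<And>x. x \<in> branches T \<Longrightarrow> (\<lambda>n. g n x) \<longlonglongrightarrow> f x"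
    using assms unfolding baire_class_1_def by blast
  then obtain u where u: "\<forall>x\<in>branches T. (\<lambda>t. u (map x [0..<t])) \<longlonglongrightarrow> f x"
    using pointwise_limit_of_continuous_imp_limit_along_branches by blast
  have "ereal (f x) = limsup (\<lambda>t. ereal (u (map x [0..<Suc t])))" if "x \<in> branches T" for x
  proof -
    have "(\<lambda>t. u (map x [0..<Suc t])) \<longlonglongrightarrow> f x"
      using LIMSEQ_Suc u that by blast
    then have "(\<lambda>t. ereal (u (map x [0..<Suc t]))) \<longlonglongrightarrow> ereal (f x)"
      by (rule tendsto_ereal)
    then show ?thesis by (rule lim_imp_Limsup[symmetric, rotated]) simp
  qed
  then show ?thesis unfolding limsup_function_def by blast
qed

lemma baire_class_1_uminus:
  assumes "baire_class_1 T f"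
  shows "baire_class_1 T (\<lambda>x. - f x)"
proof -
  obtain g where "\<And>n. continuous_map (branch_topology T) euclideanreal (g n)"
    and "\<And>x. x \<in> branches T \<Longrightarrow> (\<lambda>n. g n x) \<longlonglongrightarrow> f x"
    using assms unfolding baire_class_1_def by blast
  then show ?thesis
    unfolding baire_class_1_def
    by (intro exI[of _ "\<lambda>n x. - g n x"]) (simp add: continuous_map_minus tendsto_minus)
qed

section \<open>Limsup functions are of Baire class 1\<close>

lemma exists_stopping_time:
  fixes a w :: "nat \<Rightarrow> real"
  assumes a: "limsup (\<lambda>t. ereal (a t)) = ereal c"
    and w: "limsup (\<lambda>t. ereal (- w t)) = ereal (- c)" and "\<delta> > 0"
  shows "\<exists>t j. n \<le> j \<and> j \<le> t \<and> w j \<le> a t + \<delta>"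
proof -
  have "\<delta> / 2 > 0" using \<open>\<delta> > 0\<close> by simp
  then obtain j where j: "n \<le> j" "- c - \<delta> / 2 < - w j"
    using less_limsup_erealD[OF w, of "- c - \<delta> / 2"] by (auto simp: frequently_sequentially)
  obtain t where t: "j \<le> t" "c - \<delta> / 2 < a t"
    using less_limsup_erealD[OF a, of "c - \<delta> / 2"] \<open>\<delta> / 2 > 0\<close>
    by (auto simp: frequently_sequentially)
  from j t show ?thesis by (intro exI[of _ t] exI[of _ j]) simp
qed

lemma tendsto_stopped_sequence:
  fixes a w :: "nat \<Rightarrow> real"
  assumes a: "limsup (\<lambda>t. ereal (a t)) = ereal c"
    and w: "limsup (\<lambda>t. ereal (- w t)) = ereal (- c)"
  shows "(\<lambda>n. a (LEAST t. \<exists>j. n \<le> j \<and> j \<le> t \<and> w j \<le> a t + inverse (real (Suc n)))) \<longlonglongrightarrow> c"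
proof -
  define \<tau> where "\<tau> n = (LEAST t. \<exists>j. n \<le> j \<and> j \<le> t \<and> w j \<le> a t + inverse (real (Suc n)))"
    for n
  have \<tau>: "\<exists>j. n \<le> j \<and> j \<le> \<tau> n \<and> w j \<le> a (\<tau> n) + inverse (real (Suc n))" for n
    unfolding \<tau>_def by (rule LeastI_ex) (simp add: exists_stopping_time[OF a w])
  show ?thesis
    unfolding \<tau>_def[symmetric]
  proof (rule order_tendstoI)
    fix b assume "c < b"
    then obtain N where "\<And>t. N \<le> t \<Longrightarrow> a t < b"
      using limsup_ereal_lessD[OF a] by (auto simp: eventually_sequentially)
    moreover have "n \<le> \<tau> n" for n
      using \<tau>[of n] by auto
    ultimately show "\<forall>\<^sub>F n in sequentially. a (\<tau> n) < b"
      unfolding eventually_sequentially using le_trans by blast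
  next
    fix b assume "b < c"
    define e where "e = (c - b) / 2"
    have "e > 0" using \<open>b < c\<close> by (simp add: e_def)
    then obtain N where N: "\<And>j. N \<le> j \<Longrightarrow> - w j < - c + e"
      using limsup_ereal_lessD[OF w, of "- c + e"] by (auto simp: eventually_sequentially)
    have "\<forall>\<^sub>F n in sequentially. inverse (real (Suc n)) < e"
      using order_tendstoD(2)[OF LIMSEQ_inverse_real_of_nat \<open>e > 0\<close>] .
    moreover have "\<forall>\<^sub>F n in sequentially. N \<le> n" by simp
    ultimately show "\<forall>\<^sub>F n in sequentially. b < a (\<tau> n)"
    proof eventually_elim
      case (elim n)
      obtain j where j: "n \<le> j" "w j \<le> a (\<tau> n) + inverse (real (Suc n))"
        using \<tau>[of n] by blast
      with elim have "- w j < - c + e" by (intro N) simp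
      with elim j show ?case unfolding e_def by argo
    qed
  qed
qed

lemma limsup_functions_imp_baire_class_1:
  assumes "limsup_function T f" and "limsup_function T (\<lambda>x. - f x)"
  shows "baire_class_1 T f"
proof -
  obtain u where u: "\<And>x. x \<in> branches T \<Longrightarrow>
      limsup (\<lambda>t. ereal (u (map x [0..<Suc t]))) = ereal (f x)"
    using assms(1) unfolding limsup_function_def by (metis (no_types))
  obtain v where "\<And>x. x \<in> branches T \<Longrightarrow>
      limsup (\<lambda>t. ereal (v (map x [0..<Suc t]))) = ereal (- f x)"
    using assms(2) unfolding limsup_function_def by (metis (no_types))
  then have v: "limsup (\<lambda>t. ereal (- (- v (map x [0..<Suc t])))) = ereal (- f x)"
    if "x \<in> branches T" for x
    using that by simp
  define stop where "stop n s \<longleftrightarrow> (\<exists>j. n \<le> j \<and> Suc j \<le> length s \<and>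
      - v (take (Suc j) s) \<le> u s + inverse (real (Suc n)))" for n s
  have stop_iff: "stop n (map x [0..<Suc t]) \<longleftrightarrow> (\<exists>j. n \<le> j \<and> j \<le> t \<and>
      - v (map x [0..<Suc j]) \<le> u (map x [0..<Suc t]) + inverse (real (Suc n)))" for n x t
    unfolding stop_def by (auto simp: take_map min_def simp del: upt_Suc)
  define g where "g n x = u (map x [0..<Suc (LEAST t. stop n (map x [0..<Suc t]))])" for n x
  have "continuous_map (branch_topology T) euclideanreal (g n)" for n
    unfolding g_def
    by (rule continuous_map_stopped_prefix_function)
      (use stop_iff exists_stopping_time[OF u v] in \<open>simp del: upt_Suc\<close>)
  moreover have "(\<lambda>n. g n x) \<longlonglongrightarrow> f x" if "x \<in> branches T" for x
    unfolding g_def stop_iff using tendsto_stopped_sequence[OF u v, OF that that] by simp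
  ultimately show ?thesis unfolding baire_class_1_def by blast
qed

theorem mainTheorem5:
  fixes A :: "'a set" and T :: "'a list set" and f :: "(nat \<Rightarrow> 'a) \<Rightarrow> real"
  assumes "A \<noteq> {}" and "countable A" and "pruned_tree A T"
  shows "baire_class_1 T f \<longleftrightarrow> limsup_function T f \<and> limsup_function T (\<lambda>x. - f x)"
  using baire_class_1_imp_limsup_function baire_class_1_uminus limsup_functions_imp_baire_class_1
  by blast

end
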